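(* Let $a_1<a_2$ be positive integers and let $g=\gcd(a_1,a_2)$. For generic $(c_1,c_2)\in\mathbb{C}^2$, the number of common solutions $(x_1,x_2)\in\mathbb{C}^2$ of the equations $x_1^{a_1}+x_2^{a_1}=c_1$ and $x_1^{a_2}+x_2^{a_2}=c_2$ equals $a_1(a_2-g)$ if both $a_1/g$ and $a_2/g$ are odd, and equals $a_1a_2$ otherwise. *)

theory Defs
  imports Complex_Main "HOL-Computational_Algebra.Polynomial"
begin

(* A bivariate complex polynomial is represented as a polynomial with polynomial
   coefficients, Q :: complex poly poly; its value at (c1,c2) is obtained by
   evaluating the outer variable at c2 and the inner variable at c1. *)
definition eval2 :: "complex poly poly \<Rightarrow> complex \<Rightarrow> complex \<Rightarrow> complex" where
  "eval2 Q c1 c2 = poly (poly Q [:c2:]) c1"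

(* A property holds for generic (c1,c2) in C^2 iff it holds on a nonempty
   Zariski-open set, i.e. outside the zero locus of some nonzero polynomial. *)
definition generic2 :: "(complex \<Rightarrow> complex \<Rightarrow> bool) \<Rightarrow> bool" where
  "generic2 P \<longleftrightarrow> (\<exists>Q :: complex poly poly. Q \<noteq> 0 \<and>
      (\<forall>c1 c2. eval2 Q c1 c2 \<noteq> 0 \<longrightarrow> P c1 c2))"

end

theory Submission
  imports Defs "HOL-Computational_Algebra.Fundamental_Theorem_Algebra"
begin

(* Write a1 = g p and a2 = g q with p, q coprime. The solutions are exactly the pairs of g-th
   roots of solutions (u, v) of the system with exponents p, q, and generically u, v are nonzero,
   so each (u, v) contributes g^2 solutions. For coprime p, q a solution (u, v) is determined by
   its slope mu = v / u, because mu fixes u^p and u^q and these fix u; eliminating u, the slopes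
   are the roots of (1 + mu^q)^p - w (1 + mu^p)^q with 1 + mu^p nonzero, where w = c2^p / c1^q.
   This polynomial has degree pq, its roots are simple for w outside a finite set, and a root with
   1 + mu^p = 0 exists only when p and q are both odd: it is mu = -1, of multiplicity exactly p. *)

lemma card_roots_rsquarefree:
  fixes p :: "complex poly"
  assumes "rsquarefree p"
  shows "card {z. poly p z = 0} = degree p"
proof -
  have "p \<noteq> 0" using assms by (simp add: rsquarefree_def)
  have "degree p = degree (smult (lead_coeff p) (\<Prod>z | poly p z = 0. [:-z, 1:]))"
    using complex_poly_decompose_rsquarefree[OF assms] by simp
  also have "\<dots> = degree (\<Prod>z | poly p z = 0. [:-z, 1:])" using \<open>p \<noteq> 0\<close> by simp
  also have "\<dots> = (\<Sum>z | poly p z = 0. degree [:-z, 1:])"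
    by (rule degree_prod_eq_sum_degree) auto
  finally show ?thesis by simp
qed

lemma poly_pderiv_linear_factor:
  fixes h :: "'a::idom poly"
  shows "poly (pderiv ([:-a, 1:] * h)) a = poly h a"
  by (simp only: pderiv_mult) (simp add: pderiv_pCons)

lemma finite_power_eq_power:
  assumes "m \<noteq> n"
  shows "finite {z :: 'a::idom. z ^ m = z ^ n}"
proof -
  have "coeff (monom 1 m - monom 1 n) m = (1 :: 'a)"
    using assms by (simp add: coeff_monom)
  then have "monom 1 m - monom 1 n \<noteq> (0 :: 'a poly)" by (metis coeff_0 zero_neq_one)
  then have "finite {z. poly (monom 1 m - monom 1 n) z = (0 :: 'a)}"
    by (rule poly_roots_finite)
  then show ?thesis by (simp add: poly_monom)
qed

lemma coprime_power_eq_imp_eq: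
  fixes u v :: "'a::idom"
  assumes "coprime p q" "0 < p" "u ^ p = v ^ p" "u ^ q = v ^ q"
  shows "u = v"
proof (cases "u = 0")
  case True
  then show ?thesis using assms by (metis power_eq_0_iff)
next
  case False
  obtain x y where xy: "p * x = q * y + 1" using bezout_nat[of p q] assms by auto
  have "u ^ (q * y) * u = u ^ (p * x)" using xy by (simp add: power_add)
  also have "\<dots> = v ^ (p * x)" using assms by (simp add: power_mult)
  also have "\<dots> = v ^ (q * y) * v" using xy by (simp add: power_add)
  also have "v ^ (q * y) = u ^ (q * y)" using assms by (simp add: power_mult)
  finally show ?thesis using False by simp
qed

lemma coprime_powers_common_root:
  fixes A B :: "'a::field"
  assumes "coprime p q" "0 < p" "A \<noteq> 0" "B \<noteq> 0" "A ^ q = B ^ p"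
  obtains u where "u ^ p = A" "u ^ q = B"
proof -
  obtain x y where xy: "p * x = q * y + 1" using bezout_nat[of p q] assms by auto
  define u where "u = A ^ x / B ^ y"
  have "u ^ p = A ^ (p * x) / B ^ (p * y)"
    by (simp add: u_def power_divide power_mult[symmetric] mult.commute)
  also have "B ^ (p * y) = A ^ (q * y)" using assms(5) by (metis power_mult)
  also have "A ^ (p * x) = A ^ (q * y) * A" using xy by (simp add: power_add)
  finally have "u ^ p = A" using assms by simp
  have "u ^ q = A ^ (q * x) / B ^ (q * y)"
    by (simp add: u_def power_divide power_mult[symmetric] mult.commute)
  also have "A ^ (q * x) = B ^ (p * x)" using assms(5) by (metis power_mult)
  also have "B ^ (p * x) = B ^ (q * y) * B" using xy by (simp add: power_add)
  finally have "u ^ q = B" using assms by simp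
  with \<open>u ^ p = A\<close> show ?thesis by (rule that)
qed

lemma coprime_powers_eq_neg_one:
  fixes \<mu> :: "'a::{idom, ring_char_0}"
  assumes "coprime p q" "0 < p" "\<mu> ^ p = -1" "\<mu> ^ q = -1"
  shows "\<mu> = -1 \<and> odd p \<and> odd q"
proof -
  have "(\<mu>\<^sup>2) ^ n = (\<mu> ^ n)\<^sup>2" for n
    by (simp add: power_mult[symmetric] mult.commute)
  then have "(\<mu>\<^sup>2) ^ p = 1 ^ p" "(\<mu>\<^sup>2) ^ q = 1 ^ q"
    using assms(3,4) by simp_all
  then have "\<mu>\<^sup>2 = 1" using coprime_power_eq_imp_eq[OF assms(1,2)] by blast
  moreover have "\<mu> \<noteq> 1" using assms by auto
  ultimately have "\<mu> = -1" by (simp add: power2_eq_1_iff)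
  then show ?thesis using assms by (simp add: minus_one_power_iff split: if_splits)
qed

definition pencil_poly :: "nat \<Rightarrow> nat \<Rightarrow> complex \<Rightarrow> complex poly" where
  "pencil_poly p q w = ([:1:] + monom 1 q) ^ p - smult w (([:1:] + monom 1 p) ^ q)"

lemma poly_pencil_poly [simp]:
  "poly (pencil_poly p q w) \<mu> = (1 + \<mu> ^ q) ^ p - w * (1 + \<mu> ^ p) ^ q"
  by (simp add: pencil_poly_def poly_monom)

lemma poly_pderiv_pencil_poly:
  "poly (pderiv (pencil_poly p q w)) \<mu> =
     of_nat p * (1 + \<mu> ^ q) ^ (p - 1) * (of_nat q * \<mu> ^ (q - 1))
     - w * (of_nat q * (1 + \<mu> ^ p) ^ (q - 1) * (of_nat p * \<mu> ^ (p - 1)))"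
  by (simp add: pencil_poly_def pderiv_diff pderiv_smult pderiv_power pderiv_add pderiv_monom
      pderiv_pCons poly_monom)

lemma degree_one_plus_monom:
  "0 < n \<Longrightarrow> degree ([:1:] + monom (1::'a::comm_ring_1) n) = n"
  by (simp add: degree_add_eq_right degree_monom_eq)

lemma lead_coeff_one_plus_monom:
  "0 < n \<Longrightarrow> lead_coeff ([:1:] + monom (1::'a::comm_ring_1) n) = 1"
  by (cases n) (simp_all add: degree_one_plus_monom coeff_monom)

lemma one_plus_monom_power:
  assumes "0 < n"
  shows "degree (([:1:] + monom (1::'a::idom) n) ^ m) = m * n"
    and "coeff (([:1:] + monom (1::'a) n) ^ m) (m * n) = 1"
proof -
  have "degree ([:1:] + monom (1::'a) n) = n" by (rule degree_one_plus_monom[OF assms])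
  moreover from this have "[:1:] + monom (1::'a) n \<noteq> 0" using assms by auto
  ultimately show "degree (([:1:] + monom (1::'a) n) ^ m) = m * n"
    by (simp add: degree_power_eq)
  then show "coeff (([:1:] + monom (1::'a) n) ^ m) (m * n) = 1"
    by (metis lead_coeff_power lead_coeff_one_plus_monom[OF assms] power_one)
qed

lemma degree_pencil_poly:
  assumes "0 < p" "0 < q" "w \<noteq> 1"
  shows "degree (pencil_poly p q w) = p * q"
proof -
  let ?N = "([:1:] + monom (1::complex) q) ^ p" and ?D = "([:1:] + monom (1::complex) p) ^ q"
  have N: "degree ?N = p * q" "coeff ?N (p * q) = 1"
    by (fact one_plus_monom_power[OF assms(2)])+
  have D: "degree ?D = p * q" "coeff ?D (p * q) = 1"
    using one_plus_monom_power[OF assms(1), of q] by (simp_all add: mult.commute)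
  have "coeff (pencil_poly p q w) (p * q) = 1 - w"
    using N D by (simp add: pencil_poly_def)
  moreover have "degree (pencil_poly p q w) \<le> p * q"
    unfolding pencil_poly_def using N D
    by (intro degree_diff_le order.trans[OF degree_smult_le]) simp_all
  moreover have "coeff (pencil_poly p q w) (p * q) \<noteq> 0"
    using calculation assms by simp
  ultimately show ?thesis using le_degree by (metis antisym)
qed

lemma pencil_poly_double_root:
  assumes "0 < p" "0 < q" "w \<noteq> 0" "1 + \<mu> ^ p \<noteq> 0"
    and "poly (pencil_poly p q w) \<mu> = 0" "poly (pderiv (pencil_poly p q w)) \<mu> = 0"
  shows "\<mu> ^ (p - 1) = \<mu> ^ (q - 1)"
proof -
  define a where "a = 1 + \<mu> ^ q"
  define b where "b = 1 + \<mu> ^ p"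
  have e0: "a ^ p = w * b ^ q"
    using assms(5) by (simp add: a_def b_def)
  have e1: "of_nat p * a ^ (p - 1) * (of_nat q * \<mu> ^ (q - 1))
      = w * (of_nat q * b ^ (q - 1) * (of_nat p * \<mu> ^ (p - 1)))"
    using assms(6) by (simp add: poly_pderiv_pencil_poly a_def b_def)
  have "b \<noteq> 0" using assms(4) by (simp add: b_def)
  then have "a \<noteq> 0" using e0 assms(1,3) by (auto simp: zero_power)
  \<comment> \<open>multiply the derivative equation by \<open>a b\<close> and substitute \<open>a ^ p = w b ^ q\<close>\<close>
  have "of_nat p * of_nat q * a ^ p * (b * \<mu> ^ (q - 1))
      = (of_nat p * a ^ (p - 1) * (of_nat q * \<mu> ^ (q - 1))) * a * b"
    using assms(1) by (cases p) (simp_all add: algebra_simps)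
  also have "\<dots> = w * (of_nat q * b ^ (q - 1) * (of_nat p * \<mu> ^ (p - 1))) * a * b"
    using e1 by simp
  also have "\<dots> = of_nat p * of_nat q * (w * b ^ q) * (a * \<mu> ^ (p - 1))"
    using assms(2) by (cases q) (simp_all add: algebra_simps)
  also have "\<dots> = of_nat p * of_nat q * a ^ p * (a * \<mu> ^ (p - 1))"
    using e0 by simp
  finally have "b * \<mu> ^ (q - 1) = a * \<mu> ^ (p - 1)"
    using \<open>a \<noteq> 0\<close> assms(1,2) by simp
  moreover have "\<mu> ^ p * \<mu> ^ (q - 1) = \<mu> ^ q * \<mu> ^ (p - 1)"
    using assms(1,2) by (simp add: power_add[symmetric] add.commute)
  ultimately show ?thesis by (simp add: a_def b_def algebra_simps)
qed

(* Apart from the degenerate values 0 and 1, this collects the w for which pencil_poly p q w can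
   have a multiple root off the poles 1 + mu^p = 0: by pencil_poly_double_root such a root
   satisfies mu^(p-1) = mu^(q-1). *)
definition pencil_exceptional :: "nat \<Rightarrow> nat \<Rightarrow> complex set" where
  "pencil_exceptional p q =
     {0, 1} \<union> (\<lambda>\<mu>. (1 + \<mu> ^ q) ^ p / (1 + \<mu> ^ p) ^ q) ` {\<mu>. \<mu> ^ (p - 1) = \<mu> ^ (q - 1)}"

lemma finite_pencil_exceptional:
  assumes "0 < p" "0 < q" "p \<noteq> q"
  shows "finite (pencil_exceptional p q)"
  using finite_power_eq_power[of "p - 1" "q - 1", where 'a = complex] assms
  by (simp add: pencil_exceptional_def)

lemma rsquarefree_pencil_poly_factor:
  assumes "0 < p" "0 < q" "w \<notin> pencil_exceptional p q"
    and "pencil_poly p q w = C * P" "P \<noteq> 0"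
    and "\<And>\<mu>. poly P \<mu> = 0 \<Longrightarrow> 1 + \<mu> ^ p \<noteq> 0"
  shows "rsquarefree P"
  unfolding rsquarefree_roots
proof (intro allI notI)
  fix \<mu> assume root: "poly P \<mu> = 0 \<and> poly (pderiv P) \<mu> = 0"
  have "poly (pencil_poly p q w) \<mu> = 0" "poly (pderiv (pencil_poly p q w)) \<mu> = 0"
    using root by (simp_all add: assms(4) pderiv_mult)
  moreover have "w \<noteq> 0" using assms(3) by (simp add: pencil_exceptional_def)
  ultimately have "\<mu> ^ (p - 1) = \<mu> ^ (q - 1)"
    using pencil_poly_double_root assms(1,2,6) root by blast
  moreover have "w = (1 + \<mu> ^ q) ^ p / (1 + \<mu> ^ p) ^ q"
    using \<open>poly (pencil_poly p q w) \<mu> = 0\<close> assms(6) root by (simp add: field_simps)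
  ultimately have "w \<in> pencil_exceptional p q" by (auto simp: pencil_exceptional_def)
  with assms(3) show False by contradiction
qed

lemma pencil_poly_root_with_pole:
  assumes "coprime p q" "0 < p" "0 < q"
    and "poly (pencil_poly p q w) \<mu> = 0" "1 + \<mu> ^ p = 0"
  shows "\<mu> = -1 \<and> odd p \<and> odd q"
proof -
  have "(1 + \<mu> ^ q) ^ p = 0" using assms(2-5) by simp
  then have "\<mu> ^ q = -1" by (simp add: add_eq_0_iff)
  moreover have "\<mu> ^ p = -1" using assms(5) by (simp add: add_eq_0_iff)
  ultimately show ?thesis using coprime_powers_eq_neg_one[OF assms(1,2)] by blast
qed

lemma one_plus_monom_odd_factor:
  assumes "odd n"
  obtains R where "[:1:] + monom 1 n = [:1, 1:] * R" "poly R (-1) = (of_nat n :: 'a::idom)"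
proof -
  have "poly ([:1:] + monom 1 n) (-1 :: 'a) = 0" using assms by (simp add: poly_monom)
  then have "[:-(-1), 1:] dvd [:1:] + monom (1::'a) n" by (simp only: poly_eq_0_iff_dvd)
  then obtain R where R: "[:1:] + monom (1::'a) n = [:-(-1), 1:] * R" by (rule dvdE)
  \<comment> \<open>\<open>-1\<close> is a simple root: the derivative \<open>n X ^ (n - 1)\<close> does not vanish there\<close>
  have "poly R (-1) = poly (pderiv ([:1:] + monom 1 n)) (-1)"
    by (simp only: R poly_pderiv_linear_factor)
  also have "\<dots> = of_nat n"
    using assms by (simp add: pderiv_add pderiv_monom poly_monom)
  finally show ?thesis using R that by simp
qed

lemma pencil_poly_odd_factorization:
  assumes "odd p" "odd q" "p < q"
  obtains P where "pencil_poly p q w = [:1, 1:] ^ p * P" "poly P (-1) \<noteq> 0"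
proof -
  let ?L = "[:1, 1:] :: complex poly"
  obtain R where R: "[:1:] + monom 1 q = ?L * R" "poly R (-1) = of_nat q"
    using one_plus_monom_odd_factor[OF assms(2)] by blast
  obtain S where S: "[:1:] + monom 1 p = ?L * S"
    using one_plus_monom_odd_factor[OF assms(1)] by blast
  define P where "P = R ^ p - smult w (?L ^ (q - p) * S ^ q)"
  have "?L ^ q = ?L ^ p * ?L ^ (q - p)"
    using assms(3) by (simp add: power_add[symmetric])
  then have "pencil_poly p q w = ?L ^ p * R ^ p - smult w (?L ^ p * ?L ^ (q - p) * S ^ q)"
    unfolding pencil_poly_def R(1) S by (simp only: power_mult_distrib)
  also have "\<dots> = ?L ^ p * P"
    by (simp add: P_def right_diff_distrib mult.assoc)
  finally have "pencil_poly p q w = ?L ^ p * P" .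
  moreover have "poly P (-1) \<noteq> 0"
    using assms(2,3) by (simp add: P_def R power_0_left)
  ultimately show ?thesis by (rule that)
qed

lemma pencil_poly_factorization:
  assumes "0 < p" "p < q" "coprime p q"
  obtains P where "pencil_poly p q w = [:1, 1:] ^ (if odd p \<and> odd q then p else 0) * P"
    and "\<And>\<mu>. poly P \<mu> = 0 \<longleftrightarrow> poly (pencil_poly p q w) \<mu> = 0 \<and> 1 + \<mu> ^ p \<noteq> 0"
proof -
  have pole: "\<mu> = -1 \<and> odd p \<and> odd q"
    if "poly (pencil_poly p q w) \<mu> = 0" "1 + \<mu> ^ p = 0" for \<mu>
    using pencil_poly_root_with_pole[OF assms(3,1) _ that] assms(1,2) by simp
  show ?thesis
  proof (cases "odd p \<and> odd q")
    case True
    then obtain P where P: "pencil_poly p q w = [:1, 1:] ^ p * P" "poly P (-1) \<noteq> 0"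
      using pencil_poly_odd_factorization assms(2) by blast
    have "poly P \<mu> = 0 \<longleftrightarrow> poly (pencil_poly p q w) \<mu> = 0 \<and> 1 + \<mu> ^ p \<noteq> 0" for \<mu>
    proof
      assume "poly P \<mu> = 0"
      moreover from this have "\<mu> \<noteq> -1" using P(2) by auto
      ultimately show "poly (pencil_poly p q w) \<mu> = 0 \<and> 1 + \<mu> ^ p \<noteq> 0"
        using pole by (auto simp: P(1))
    next
      assume "poly (pencil_poly p q w) \<mu> = 0 \<and> 1 + \<mu> ^ p \<noteq> 0"
      moreover from this have "1 + \<mu> \<noteq> 0" using True by (auto simp: add_eq_0_iff)
      ultimately show "poly P \<mu> = 0" by (simp add: P(1))
    qed
    with P(1) True show ?thesis using that by simp
  next
    case False
    have "pencil_poly p q w = [:1, 1:] ^ (if odd p \<and> odd q then p else 0) * pencil_poly p q w"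
      by (simp only: if_not_P[OF False]) simp
    moreover have "poly (pencil_poly p q w) \<mu> = 0 \<longleftrightarrow>
        poly (pencil_poly p q w) \<mu> = 0 \<and> 1 + \<mu> ^ p \<noteq> 0" for \<mu>
      using pole False by blast
    ultimately show ?thesis by (rule that)
  qed
qed

definition pencil_roots :: "nat \<Rightarrow> nat \<Rightarrow> complex \<Rightarrow> complex set" where
  "pencil_roots p q w = {\<mu>. poly (pencil_poly p q w) \<mu> = 0 \<and> 1 + \<mu> ^ p \<noteq> 0}"

lemma card_pencil_roots:
  assumes "0 < p" "p < q" "coprime p q" "w \<notin> pencil_exceptional p q"
  shows "finite (pencil_roots p q w)"
    and "card (pencil_roots p q w) = p * q - (if odd p \<and> odd q then p else 0)"
proof -
  define e where "e = (if odd p \<and> odd q then p else 0)"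
  obtain P where P: "pencil_poly p q w = [:1, 1:] ^ e * P"
    and roots: "\<And>\<mu>. poly P \<mu> = 0 \<longleftrightarrow> poly (pencil_poly p q w) \<mu> = 0 \<and> 1 + \<mu> ^ p \<noteq> 0"
    using pencil_poly_factorization[OF assms(1-3)] unfolding e_def by blast
  have "degree (pencil_poly p q w) = p * q"
    using assms by (intro degree_pencil_poly) (auto simp: pencil_exceptional_def)
  moreover have "0 < p * q" using assms(1,2) by simp
  ultimately have "P \<noteq> 0" by (auto simp: P)
  then have "degree P = p * q - e"
    using \<open>degree (pencil_poly p q w) = p * q\<close> by (simp add: P degree_mult_eq degree_power_eq)
  have "rsquarefree P"
    using assms(1,2,4) P \<open>P \<noteq> 0\<close> roots by (intro rsquarefree_pencil_poly_factor) auto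
  have eq: "pencil_roots p q w = {\<mu>. poly P \<mu> = 0}"
    using roots by (auto simp: pencil_roots_def)
  show "finite (pencil_roots p q w)"
    unfolding eq using \<open>P \<noteq> 0\<close> by (rule poly_roots_finite)
  show "card (pencil_roots p q w) = p * q - e"
    unfolding eq using card_roots_rsquarefree \<open>rsquarefree P\<close> \<open>degree P = p * q - e\<close> by simp
qed

definition power_sum_solutions :: "nat \<Rightarrow> nat \<Rightarrow> complex \<Rightarrow> complex \<Rightarrow> (complex \<times> complex) set" where
  "power_sum_solutions a b c1 c2 = {(x, y). x ^ a + y ^ a = c1 \<and> x ^ b + y ^ b = c2}"

lemma power_sum_solutions_nonzero:
  assumes "0 < p" "0 < q" "c1 ^ q \<noteq> c2 ^ p" "(u, v) \<in> power_sum_solutions p q c1 c2"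
  shows "u \<noteq> 0" and "v \<noteq> 0"
proof -
  have "(z ^ p) ^ q = (z ^ q) ^ p" for z :: complex
    by (simp add: power_mult[symmetric] mult.commute)
  then show "u \<noteq> 0" and "v \<noteq> 0"
    using assms by (auto simp: power_sum_solutions_def zero_power)
qed

lemma power_sum_solutions_mult:
  "power_sum_solutions (g * p) (g * q) c1 c2
     = (\<lambda>(x, y). (x ^ g, y ^ g)) -` power_sum_solutions p q c1 c2"
  by (auto simp: power_sum_solutions_def power_mult)

lemma card_power_vimage_pairs:
  fixes T :: "(complex \<times> complex) set"
  assumes "0 < g" "finite T" "\<And>u v. (u, v) \<in> T \<Longrightarrow> u \<noteq> 0 \<and> v \<noteq> 0"
  shows "finite ((\<lambda>(x, y). (x ^ g, y ^ g)) -` T)"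
    and "card ((\<lambda>(x, y). (x ^ g, y ^ g)) -` T) = g * g * card T"
proof -
  define F where "F t = {x. x ^ g = fst t} \<times> {y. y ^ g = snd t}" for t :: "complex \<times> complex"
  have vimage: "(\<lambda>(x, y). (x ^ g, y ^ g)) -` T = (\<Union>t\<in>T. F t)"
    by (auto simp: F_def)
  have F: "finite (F t)" "card (F t) = g * g" if "t \<in> T" for t
  proof -
    obtain u v where t: "t = (u, v)" by fastforce
    with that assms(3) have "u \<noteq> 0" "v \<noteq> 0" by auto
    with assms(1) show "finite (F t)" "card (F t) = g * g"
      by (auto simp: t F_def card_cartesian_product card_nth_roots)
  qed
  show "finite ((\<lambda>(x, y). (x ^ g, y ^ g)) -` T)"
    unfolding vimage using assms(2) F by blast
  have "card (\<Union>t\<in>T. F t) = (\<Sum>t\<in>T. card (F t))"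
    using assms(2) F by (intro card_UN_disjoint) (auto simp: F_def)
  then show "card ((\<lambda>(x, y). (x ^ g, y ^ g)) -` T) = g * g * card T"
    unfolding vimage using F by simp
qed

lemma power_sum_solutions_scaled:
  "(u, \<mu> * u) \<in> power_sum_solutions p q c1 c2 \<longleftrightarrow>
     u ^ p * (1 + \<mu> ^ p) = c1 \<and> u ^ q * (1 + \<mu> ^ q) = c2"
  by (simp add: power_sum_solutions_def power_mult_distrib algebra_simps)

lemma pencil_poly_root_of_scaling:
  assumes "c1 \<noteq> 0" "u ^ p * (1 + \<mu> ^ p) = c1" "u ^ q * (1 + \<mu> ^ q) = c2"
  shows "poly (pencil_poly p q (c2 ^ p / c1 ^ q)) \<mu> = 0" and "1 + \<mu> ^ p \<noteq> 0"
proof -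
  have "c1 ^ q * (1 + \<mu> ^ q) ^ p = (u ^ p) ^ q * (1 + \<mu> ^ p) ^ q * (1 + \<mu> ^ q) ^ p"
    unfolding assms(2)[symmetric] by (simp add: power_mult_distrib)
  also have "\<dots> = c2 ^ p * (1 + \<mu> ^ p) ^ q"
    unfolding assms(3)[symmetric] by (simp add: power_mult_distrib mult_ac flip: power_mult)
  finally show "poly (pencil_poly p q (c2 ^ p / c1 ^ q)) \<mu> = 0"
    using assms(1) by (simp add: field_simps)
  show "1 + \<mu> ^ p \<noteq> 0" using assms(1,2) by auto
qed

lemma scaling_of_pencil_poly_root:
  assumes "coprime p q" "0 < p" "c1 \<noteq> 0" "c2 \<noteq> 0"
    and "poly (pencil_poly p q (c2 ^ p / c1 ^ q)) \<mu> = 0" "1 + \<mu> ^ p \<noteq> 0"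
  obtains u where "u ^ p * (1 + \<mu> ^ p) = c1" "u ^ q * (1 + \<mu> ^ q) = c2"
proof -
  have eq: "c1 ^ q * (1 + \<mu> ^ q) ^ p = c2 ^ p * (1 + \<mu> ^ p) ^ q"
    using assms(3,5) by (simp add: field_simps)
  then have "1 + \<mu> ^ q \<noteq> 0" using assms(2,4,6) by (auto simp: zero_power)
  define A where "A = c1 / (1 + \<mu> ^ p)"
  define B where "B = c2 / (1 + \<mu> ^ q)"
  have "A ^ q = B ^ p"
    using eq \<open>1 + \<mu> ^ q \<noteq> 0\<close> assms(6) by (simp add: A_def B_def power_divide field_simps)
  moreover have "A \<noteq> 0" "B \<noteq> 0"
    using assms(3,4,6) \<open>1 + \<mu> ^ q \<noteq> 0\<close> by (simp_all add: A_def B_def)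
  ultimately obtain u where "u ^ p = A" "u ^ q = B"
    using coprime_powers_common_root[OF assms(1,2)] by blast
  then have "u ^ p * (1 + \<mu> ^ p) = c1" "u ^ q * (1 + \<mu> ^ q) = c2"
    using assms(6) \<open>1 + \<mu> ^ q \<noteq> 0\<close> by (simp_all add: A_def B_def eq_divide_eq)
  then show ?thesis by (rule that)
qed

lemma power_sum_solutions_slope_bij:
  assumes "coprime p q" "0 < p" "0 < q" "c1 \<noteq> 0" "c2 \<noteq> 0" "c1 ^ q \<noteq> c2 ^ p"
  shows "bij_betw (\<lambda>(u, v). v / u) (power_sum_solutions p q c1 c2)
           (pencil_roots p q (c2 ^ p / c1 ^ q))"
proof -
  let ?S = "power_sum_solutions p q c1 c2"
  have slope: "v = (v / u) * u"
    and scaled: "u ^ p * (1 + (v / u) ^ p) = c1 \<and> u ^ q * (1 + (v / u) ^ q) = c2"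
    if "(u, v) \<in> ?S" for u v
  proof -
    show "v = (v / u) * u"
      using power_sum_solutions_nonzero[OF assms(2,3,6) that] by simp
    with that show "u ^ p * (1 + (v / u) ^ p) = c1 \<and> u ^ q * (1 + (v / u) ^ q) = c2"
      by (metis power_sum_solutions_scaled)
  qed
  have "inj_on (\<lambda>(u, v). v / u) ?S"
  proof (intro inj_onI, clarify)
    fix u v u' v' assume S: "(u, v) \<in> ?S" "(u', v') \<in> ?S" and "v / u = v' / u'"
    then have "u ^ p = u' ^ p" "u ^ q = u' ^ q"
      using scaled[OF S(1)] scaled[OF S(2)] assms(4,5) by (metis mult_right_cancel mult_zero_right)+
    then have "u = u'" using coprime_power_eq_imp_eq[OF assms(1,2)] by blast
    with slope[OF S(1)] slope[OF S(2)] \<open>v / u = v' / u'\<close> show "u = u' \<and> v = v'" by metis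
  qed
  moreover have "(\<lambda>(u, v). v / u) ` ?S = pencil_roots p q (c2 ^ p / c1 ^ q)"
  proof (intro equalityI subsetI)
    fix \<mu> assume "\<mu> \<in> (\<lambda>(u, v). v / u) ` ?S"
    then show "\<mu> \<in> pencil_roots p q (c2 ^ p / c1 ^ q)"
      using scaled pencil_poly_root_of_scaling[OF assms(4)] by (fastforce simp: pencil_roots_def)
  next
    fix \<mu> assume "\<mu> \<in> pencil_roots p q (c2 ^ p / c1 ^ q)"
    then obtain u where "u ^ p * (1 + \<mu> ^ p) = c1" "u ^ q * (1 + \<mu> ^ q) = c2"
      using scaling_of_pencil_poly_root[OF assms(1,2,4,5)] by (auto simp: pencil_roots_def)
    then have "(u, \<mu> * u) \<in> ?S" and "u \<noteq> 0"
      using assms(2,4) by (auto simp: power_sum_solutions_scaled)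
    then show "\<mu> \<in> (\<lambda>(u, v). v / u) ` ?S" by force
  qed
  ultimately show ?thesis by (simp add: bij_betw_def)
qed

lemma card_power_sum_solutions_coprime:
  assumes "0 < p" "p < q" "coprime p q" "c1 \<noteq> 0" "c2 ^ p / c1 ^ q \<notin> pencil_exceptional p q"
  shows "finite (power_sum_solutions p q c1 c2)"
    and "card (power_sum_solutions p q c1 c2) = p * q - (if odd p \<and> odd q then p else 0)"
proof -
  have "c2 \<noteq> 0" "c1 ^ q \<noteq> c2 ^ p"
    using assms(1,4,5) by (auto simp: pencil_exceptional_def zero_power)
  then have bij: "bij_betw (\<lambda>(u, v). v / u) (power_sum_solutions p q c1 c2)
      (pencil_roots p q (c2 ^ p / c1 ^ q))"
    using assms(1-4) by (intro power_sum_solutions_slope_bij) auto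
  show "finite (power_sum_solutions p q c1 c2)"
    using bij_betw_finite[OF bij] card_pencil_roots(1)[OF assms(1-3,5)] by blast
  show "card (power_sum_solutions p q c1 c2) = p * q - (if odd p \<and> odd q then p else 0)"
    using bij_betw_same_card[OF bij] card_pencil_roots(2)[OF assms(1-3,5)] by simp
qed

lemma card_power_sum_solutions:
  assumes "0 < g" "0 < p" "p < q" "coprime p q"
    and "c1 \<noteq> 0" "c2 ^ p / c1 ^ q \<notin> pencil_exceptional p q"
  shows "finite (power_sum_solutions (g * p) (g * q) c1 c2)"
    and "card (power_sum_solutions (g * p) (g * q) c1 c2)
           = g * g * (p * q - (if odd p \<and> odd q then p else 0))"
proof -
  have "c1 ^ q \<noteq> c2 ^ p" using assms(5,6) by (auto simp: pencil_exceptional_def)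
  then have "u \<noteq> 0 \<and> v \<noteq> 0" if "(u, v) \<in> power_sum_solutions p q c1 c2" for u v
    using power_sum_solutions_nonzero[OF assms(2) _ _ that] assms(2,3) by simp
  then show "finite (power_sum_solutions (g * p) (g * q) c1 c2)"
    and "card (power_sum_solutions (g * p) (g * q) c1 c2)
           = g * g * (p * q - (if odd p \<and> odd q then p else 0))"
    unfolding power_sum_solutions_mult
    using card_power_vimage_pairs[OF assms(1) card_power_sum_solutions_coprime(1)[OF assms(2-6)]]
      card_power_sum_solutions_coprime(2)[OF assms(2-6)] by simp_all
qed

lemma generic2_ratio_avoiding:
  assumes "finite B" "0 < q" "\<And>c1 c2. c1 \<noteq> 0 \<Longrightarrow> c2 ^ p / c1 ^ q \<notin> B \<Longrightarrow> P c1 c2"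
  shows "generic2 P"
  unfolding generic2_def
proof (intro exI conjI allI impI)
  define Q where "Q = [:[:0, 1:]:] * (\<Prod>b\<in>B. [:0, 1:] ^ p - [:[:b:]:] * [:[:0, 1:]:] ^ q)"
  have eval_Q: "eval2 Q c1 c2 = c1 * (\<Prod>b\<in>B. c2 ^ p - b * c1 ^ q)" for c1 c2
    unfolding Q_def by (simp add: eval2_def poly_prod)
  have "[:0, 1:] ^ p - [:[:b:]:] * [:[:0, 1:]:] ^ q \<noteq> 0" for b :: complex
  proof
    assume "[:0, 1:] ^ p - [:[:b:]:] * [:[:0, 1:]:] ^ q = 0"
    then have "eval2 ([:0, 1:] ^ p - [:[:b:]:] * [:[:0, 1:]:] ^ q) 0 1 = 0" by (simp add: eval2_def)
    with assms(2) show False by (simp add: eval2_def zero_power)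
  qed
  then show "Q \<noteq> 0" using assms(1) by (simp add: Q_def)
  fix c1 c2 assume nonzero: "eval2 Q c1 c2 \<noteq> 0"
  then have "c1 \<noteq> 0" by (simp add: eval_Q)
  moreover have "c2 ^ p - b * c1 ^ q \<noteq> 0" if "b \<in> B" for b
    using nonzero that assms(1) by (simp add: eval_Q)
  ultimately have "c2 ^ p / c1 ^ q \<notin> B" by force
  with \<open>c1 \<noteq> 0\<close> show "P c1 c2" by (rule assms(3))
qed

lemma generic2_card_power_sum_solutions:
  assumes "0 < g" "0 < p" "p < q" "coprime p q"
  shows "generic2 (\<lambda>c1 c2. finite (power_sum_solutions (g * p) (g * q) c1 c2) \<and>
           card (power_sum_solutions (g * p) (g * q) c1 c2)
             = g * g * (p * q - (if odd p \<and> odd q then p else 0)))"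
proof (rule generic2_ratio_avoiding[where B = "pencil_exceptional p q" and p = p and q = q])
  show "finite (pencil_exceptional p q)" and "0 < q"
    using assms(2,3) by (auto intro: finite_pencil_exceptional)
  show "finite (power_sum_solutions (g * p) (g * q) c1 c2) \<and>
      card (power_sum_solutions (g * p) (g * q) c1 c2)
        = g * g * (p * q - (if odd p \<and> odd q then p else 0))"
    if "c1 \<noteq> 0" "c2 ^ p / c1 ^ q \<notin> pencil_exceptional p q" for c1 c2
    using card_power_sum_solutions[OF assms that] by blast
qed

theorem proposition3p3:
  fixes a1 a2 :: nat
  assumes "0 < a1" and "a1 < a2"
  defines "g \<equiv> gcd a1 a2"
  shows "generic2 (\<lambda>c1 c2.
           finite {(x1 :: complex, x2 :: complex). x1 ^ a1 + x2 ^ a1 = c1 \<and> x1 ^ a2 + x2 ^ a2 = c2} \<and>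
           card {(x1 :: complex, x2 :: complex). x1 ^ a1 + x2 ^ a1 = c1 \<and> x1 ^ a2 + x2 ^ a2 = c2} =
             (if odd (a1 div g) \<and> odd (a2 div g) then a1 * (a2 - g) else a1 * a2))"
proof -
  have "g \<noteq> 0" using assms(1) by (simp add: g_def)
  then obtain p q where a1: "a1 = g * p" and a2: "a2 = g * q" and "coprime p q"
    using gcd_coprime_exists[of a1 a2] unfolding g_def[symmetric] by (metis mult.commute)
  then have "0 < g" "0 < p" "p < q" using assms(1,2) by auto
  have count: "g * g * (p * q - (if odd p \<and> odd q then p else 0))
      = (if odd p \<and> odd q then g * p * (g * q - g) else g * p * (g * q))"
    by (simp add: algebra_simps diff_mult_distrib2)
  show ?thesis
    using generic2_card_power_sum_solutions[OF \<open>0 < g\<close> \<open>0 < p\<close> \<open>p < q\<close> \<open>coprime p q\<close>]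
    unfolding a1 a2 nonzero_mult_div_cancel_left[OF \<open>g \<noteq> 0\<close>] count power_sum_solutions_def .
qed

end
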